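(* Let $n,m\ge1$ and consider the $n\times m$ grid communication graph with a direction assignment $g$ such that adjacent circles have opposite directions. Then there are exactly $\gcd(n,m)$ rings, all of them have the same length, and all of them have the same number of hitting points on each of the four walls (i.e., for each wall, every ring hits that wall the same number of times).
   Context: Grid. The $n\times m$ grid communication graph consists of $nm$ pairwise disjoint unit circles, circle $(i,j)$ in row $i$ (rows horizontal, row 1 on top) and column $j$ (columns vertical, column 1 on the left), centres on a square lattice, circle $(i,j)$ adjacent exactly to the existing circles $(i\pm1,j)$, $(i,j\pm1)$. For adjacent circles $C_i,C_j$, the link position $\phi_{ij}$ is the point of $C_i$ closest to $C_j$. A direction assignment gives each circle $C$ a direction $g(C)\in\{1,-1\}$ (counterclockwise/clockwise), with $g(C_i)=-g(C_j)$ for adjacent circles. Rings. Trace a point moving along a circle $C_i$ in direction $g(C_i)$ at constant speed; whenever it reaches a link position $\phi_{ij}$ of its current circle, it passes to $C_j$ at $\phi_{ji}$ and continues along $C_j$ in direction $g(C_j)$ (this is the motion of a robot that never meets any other robot). This motion is periodic and the closed curve it traces is a ring. Every arc of a circle between consecutive link positions belongs to exactly one ring, so the circles decompose into rings overlapping only at link positions. The length of a ring is the total length of the circle arcs forming it. Walls. A ring hits the top wall (at a circle of row 1) each time it passes through the topmost point of a circle of row 1; similarly for the bottom wall (bottommost points of circles of row $n$), the left wall (leftmost points of circles of column 1) and the right wall (rightmost points of circles of column $m$). The number of hitting points of a ring on a wall is the number of such points on the ring. *)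

theory Defs
  imports Complex_Main
begin

text \<open>Circle (i,j): row i (1 = top), column j (1 = left).
  Compass points of a circle: 0 = rightmost, 1 = topmost, 2 = leftmost, 3 = bottommost,
  i.e. angles 0, pi/2, pi, 3pi/2 (counterclockwise = increasing index).
  Since the centres lie on a square lattice, the link position towards a neighbour is
  exactly the compass point pointing to it.  Every circle is cut by its compass points into
  four quarter arcs (each of length pi/2); the arc (c,p) is the quarter arc of c starting
  at compass point p and traversed in direction g c.\<close>

type_synonym circle = "nat \<times> nat"

definition circles :: "nat \<Rightarrow> nat \<Rightarrow> circle set" where
  "circles n m = {1..n} \<times> {1..m}"

definition adjacent :: "nat \<Rightarrow> nat \<Rightarrow> circle \<Rightarrow> circle \<Rightarrow> bool" where
  "adjacent n m c d \<longleftrightarrow> c \<in> circles n m \<and> d \<in> circles n m \<and>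
     \<bar>int (fst c) - int (fst d)\<bar> + \<bar>int (snd c) - int (snd d)\<bar> = 1"

definition direction_assignment :: "nat \<Rightarrow> nat \<Rightarrow> (circle \<Rightarrow> int) \<Rightarrow> bool" where
  "direction_assignment n m g \<longleftrightarrow>
     (\<forall>c\<in>circles n m. g c = 1 \<or> g c = -1) \<and>
     (\<forall>c d. adjacent n m c d \<longrightarrow> g c = - g d)"

text \<open>The position in the lattice in the direction of compass point p
  (not necessarily an existing circle; 0 coordinates are never circles).\<close>
definition nbr :: "circle \<Rightarrow> nat \<Rightarrow> circle" where
  "nbr c p = (if p = 0 then (fst c, snd c + 1)
              else if p = 1 then (fst c - 1, snd c)
              else if p = 2 then (fst c, snd c - 1)
              else (fst c + 1, snd c))"

text \<open>Compass point reached after moving a quarter turn in direction d.\<close>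
definition rot :: "int \<Rightarrow> nat \<Rightarrow> nat" where
  "rot d p = nat ((int p + d) mod 4)"

definition arcs :: "nat \<Rightarrow> nat \<Rightarrow> (circle \<times> nat) set" where
  "arcs n m = circles n m \<times> {0..<4}"

text \<open>Motion of a robot: after traversing the quarter arc (c,p) it arrives at compass
  point q of c; if q is a link position (a neighbour exists there) it passes to that
  neighbour at the opposite compass point, otherwise it stays on c.\<close>
definition step :: "nat \<Rightarrow> nat \<Rightarrow> (circle \<Rightarrow> int) \<Rightarrow> circle \<times> nat \<Rightarrow> circle \<times> nat" where
  "step n m g a = (let c = fst a; q = rot (g c) (snd a) in
      if nbr c q \<in> circles n m then (nbr c q, (q + 2) mod 4) else (c, q))"

definition ring_of :: "nat \<Rightarrow> nat \<Rightarrow> (circle \<Rightarrow> int) \<Rightarrow> circle \<times> nat \<Rightarrow> (circle \<times> nat) set" where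
  "ring_of n m g a = {(step n m g ^^ k) a | k. True}"

definition rings :: "nat \<Rightarrow> nat \<Rightarrow> (circle \<Rightarrow> int) \<Rightarrow> (circle \<times> nat) set set" where
  "rings n m g = ring_of n m g ` arcs n m"

definition ring_length :: "(circle \<times> nat) set \<Rightarrow> real" where
  "ring_length R = (pi / 2) * real (card R)"

text \<open>Compass point q of circle c lies on ring R.\<close>
definition on_ring :: "(circle \<Rightarrow> int) \<Rightarrow> (circle \<times> nat) set \<Rightarrow> circle \<Rightarrow> nat \<Rightarrow> bool" where
  "on_ring g R c q \<longleftrightarrow> (\<exists>p. (c, p) \<in> R \<and> (p = q \<or> rot (g c) p = q))"

datatype wall = Top | Bottom | Left | Right

definition hits :: "nat \<Rightarrow> nat \<Rightarrow> (circle \<Rightarrow> int) \<Rightarrow> wall \<Rightarrow> (circle \<times> nat) set \<Rightarrow> nat" where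
  "hits n m g w R = (case w of
      Top \<Rightarrow> card {j \<in> {1..m}. on_ring g R (1, j) 1}
    | Bottom \<Rightarrow> card {j \<in> {1..m}. on_ring g R (n, j) 3}
    | Left \<Rightarrow> card {i \<in> {1..n}. on_ring g R (i, 1) 2}
    | Right \<Rightarrow> card {i \<in> {1..n}. on_ring g R (i, m) 0})"

end

theory Submission
  imports Defs
begin

(*
  Measure positions in doubled coordinates, so that every quarter arc moves the robot by +-1 in
  each coordinate.  Each coordinate then bounces back and forth between two walls, and unfolding
  the reflections turns the horizontal motion into uniform motion on Z/4m and the vertical one
  into uniform motion on Z/4n.  Unfolding is injective on arcs, so a ring is an orbit of the
  diagonal translation (u, v) |-> (u + 1, v + 1) of Z/4m x Z/4n, i.e. a class of u - v modulo
  gcd(4m, 4n) = 4 gcd(n, m).  Every class has 4m * n/gcd(n, m) elements, which gives gcd(n, m)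
  rings of equal length, and meets each wall line u = const or v = const in n/gcd(n, m),
  respectively m/gcd(n, m), points.
*)

section \<open>Diagonal orbits on a discrete torus\<close>

lemma mod_eq_solvable_gcd:
  fixes a b M N :: int
  assumes "a mod gcd M N = b mod gcd M N"
  obtains k where "k mod M = a mod M" and "k mod N = b mod N"
proof -
  obtain s r where bezout: "s * M + r * N = gcd M N"
    using bezout_int by blast
  obtain t where t: "a - b = gcd M N * t"
    using assms by (metis dvdE mod_eq_dvd_iff)
  have "a - t * s * M = b + N * (t * r)"
    using t unfolding bezout[symmetric] by (simp add: algebra_simps)
  then have "(a - t * s * M) mod N = b mod N"
    by (metis mod_mult_self2)
  moreover have "(a - t * s * M) mod M = a mod M"
    by (metis add_uminus_conv_diff mod_mult_self2 mult.commute mult_minus_left)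
  ultimately show ?thesis using that by blast
qed

definition diagonal_class :: "nat \<Rightarrow> nat \<Rightarrow> int \<times> int \<Rightarrow> (int \<times> int) set" where
  "diagonal_class M N x = {y \<in> {0..<int M} \<times> {0..<int N}.
     (fst y - snd y) mod int (gcd M N) = (fst x - snd x) mod int (gcd M N)}"

lemma diagonal_class_eq:
  "y \<in> diagonal_class M N x \<Longrightarrow> diagonal_class M N y = diagonal_class M N x"
  unfolding diagonal_class_def by auto

lemma diagonal_orbit:
  assumes "0 < M" and "0 < N"
  shows "range (\<lambda>k::nat. ((u + int k) mod int M, (v + int k) mod int N))
    = diagonal_class M N (u, v)"
proof (intro set_eqI iffI)
  let ?D = "int (gcd M N)"
  have DM: "?D dvd int M" and DN: "?D dvd int N" by simp_all
  fix y assume "y \<in> range (\<lambda>k::nat. ((u + int k) mod int M, (v + int k) mod int N))"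
  then obtain k where y: "y = ((u + int k) mod int M, (v + int k) mod int N)" by blast
  have "(fst y - snd y) mod ?D = ((u + int k) mod ?D - (v + int k) mod ?D) mod ?D"
    unfolding y fst_conv snd_conv mod_diff_eq[symmetric, of "(u + int k) mod int M"]
    by (simp only: mod_diff_left_eq mod_diff_right_eq mod_mod_cancel[OF DM] mod_mod_cancel[OF DN])
  also have "\<dots> = (u - v) mod ?D"
    by (simp add: mod_diff_eq)
  finally show "y \<in> diagonal_class M N (u, v)"
    using assms unfolding diagonal_class_def y by simp
next
  fix y assume "y \<in> diagonal_class M N (u, v)"
  then obtain u' v' where y: "y = (u', v')" "0 \<le> u'" "u' < int M" "0 \<le> v'" "v' < int N"
    and cls: "(u' - v') mod gcd (int M) (int N) = (u - v) mod gcd (int M) (int N)"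
    unfolding diagonal_class_def by auto
  have "(u' - u) mod gcd (int M) (int N) = (v' - v) mod gcd (int M) (int N)"
    using cls by (simp add: mod_eq_dvd_iff algebra_simps)
  then obtain k0 where k0: "k0 mod int M = (u' - u) mod int M" "k0 mod int N = (v' - v) mod int N"
    by (rule mod_eq_solvable_gcd)
  define k where "k = nat (k0 mod (int M * int N))"
  have k: "int k = k0 mod (int M * int N)"
    using assms by (simp add: k_def)
  have "int k mod int M = (u' - u) mod int M"
    unfolding k using k0 by (simp add: mod_mod_cancel)
  then have "(u + int k) mod int M = (u + (u' - u)) mod int M"
    by (metis mod_add_right_eq)
  moreover have "int k mod int N = (v' - v) mod int N"
    unfolding k using k0 by (simp add: mod_mod_cancel)
  then have "(v + int k) mod int N = (v + (v' - v)) mod int N"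
    by (metis mod_add_right_eq)
  ultimately have "(u + int k) mod int M = u'" "(v + int k) mod int N = v'"
    using y by simp_all
  then show "y \<in> range (\<lambda>k::nat. ((u + int k) mod int M, (v + int k) mod int N))"
    using y by blast
qed

lemma card_residue_class:
  fixes K r :: int
  assumes "0 < K"
  shows "card {v \<in> {0..<K * int L}. v mod K = r mod K} = L"
proof -
  have "{v \<in> {0..<K * int L}. v mod K = r mod K} = (\<lambda>t. r mod K + K * int t) ` {..<L}"
  proof (intro set_eqI iffI)
    fix v assume v: "v \<in> {v \<in> {0..<K * int L}. v mod K = r mod K}"
    then have "K * (v div K) < K * int L"
      using pos_mod_sign[OF assms, of v] mult_div_mod_eq[of K v] by auto
    then have "0 \<le> v div K" "v div K < int L"
      using v assms by (auto simp: pos_imp_zdiv_nonneg_iff)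
    moreover have "v = r mod K + K * (v div K)"
      using v by (metis (mono_tags, lifting) mem_Collect_eq mod_mult_div_eq)
    ultimately show "v \<in> (\<lambda>t. r mod K + K * int t) ` {..<L}"
      by (intro image_eqI[where x = "nat (v div K)"]) auto
  next
    fix v assume "v \<in> (\<lambda>t. r mod K + K * int t) ` {..<L}"
    then obtain t where t: "t < L" "v = r mod K + K * int t" by blast
    have "K * int t + K \<le> K * int L"
      using t assms by (metis mult.right_neutral distrib_left mult_left_mono of_nat_less_iff
          zless_imp_add1_zle less_le)
    moreover have "0 \<le> r mod K" "r mod K < K" "0 \<le> K * int t"
      using assms by simp_all
    ultimately have "0 \<le> v" "v < K * int L"
      using t by linarith+
    then show "v \<in> {v \<in> {0..<K * int L}. v mod K = r mod K}"
      using t by simp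
  qed
  moreover have "inj_on (\<lambda>t. r mod K + K * int t) {..<L}"
    using assms by (auto simp: inj_on_def)
  ultimately show ?thesis
    by (simp add: card_image)
qed

lemma card_diagonal_class_column:
  assumes "0 < N" and "0 \<le> u" and "u < int M"
  shows "card {v. (u, v) \<in> diagonal_class M N x} = N div gcd M N"
proof -
  let ?D = "int (gcd M N)"
  have "{v. (u, v) \<in> diagonal_class M N x}
      = {v \<in> {0..<?D * int (N div gcd M N)}. v mod ?D = (u - (fst x - snd x)) mod ?D}"
    using assms by (auto simp: diagonal_class_def mod_eq_dvd_iff algebra_simps
        simp flip: of_nat_mult)
  also have "card \<dots> = N div gcd M N"
    using assms by (intro card_residue_class) simp
  finally show ?thesis .
qed

lemma card_diagonal_class_row:
  assumes "0 < M" and "0 \<le> v" and "v < int N"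
  shows "card {u. (u, v) \<in> diagonal_class M N x} = M div gcd M N"
proof -
  let ?D = "int (gcd M N)"
  have "{u. (u, v) \<in> diagonal_class M N x}
      = {u \<in> {0..<?D * int (M div gcd M N)}. u mod ?D = (v + (fst x - snd x)) mod ?D}"
    using assms by (auto simp: diagonal_class_def mod_eq_dvd_iff algebra_simps
        simp flip: of_nat_mult)
  also have "card \<dots> = M div gcd M N"
    using assms by (intro card_residue_class) simp
  finally show ?thesis .
qed

lemma card_diagonal_class:
  assumes "0 < N"
  shows "card (diagonal_class M N x) = M * (N div gcd M N)"
proof -
  have "diagonal_class M N x = (SIGMA u:{0..<int M}. {v. (u, v) \<in> diagonal_class M N x})"
    by (auto simp: diagonal_class_def)
  then have "card (diagonal_class M N x)
      = card (SIGMA u:{0..<int M}. {v. (u, v) \<in> diagonal_class M N x})"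
    by (rule arg_cong)
  also have "\<dots> = (\<Sum>u\<in>{0..<int M}. card {v. (u, v) \<in> diagonal_class M N x})"
    by (rule card_SigmaI)
      (auto intro: finite_subset[of _ "{0..<int N}"] simp: diagonal_class_def)
  also have "\<dots> = (\<Sum>u\<in>{0..<int M}. N div gcd M N)"
    using assms by (intro sum.cong) (simp_all add: card_diagonal_class_column)
  finally show ?thesis by simp
qed

lemma card_Int_row: "card (S \<inter> UNIV \<times> {v}) = card {u. (u, v) \<in> S}"
proof -
  have "S \<inter> UNIV \<times> {v} = (\<lambda>u. (u, v)) ` {u. (u, v) \<in> S}"
    by auto
  then show ?thesis
    by (simp add: card_image inj_on_def)
qed

lemma card_Int_column: "card (S \<inter> {u} \<times> UNIV) = card {v. (u, v) \<in> S}"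
proof -
  have "S \<inter> {u} \<times> UNIV = Pair u ` {v. (u, v) \<in> S}"
    by auto
  then show ?thesis
    by (simp add: card_image inj_on_def)
qed

section \<open>Unfolding the motion of a robot\<close>

text \<open>A point at position \<open>x\<close> of the segment \<open>[0, L]\<close> moving with velocity \<open>h \<in> {1, -1}\<close>, reflected at
  both ends, moves with velocity 1 on the circle \<open>\<int>/2L\<close> once its position is read as
  \<open>x\<close> when \<open>h = 1\<close> and as \<open>2L - x\<close> when \<open>h = -1\<close>.\<close>

definition bouncing :: "int \<Rightarrow> int \<Rightarrow> int \<Rightarrow> bool" where
  "bouncing L h x \<longleftrightarrow> h = 1 \<and> 0 \<le> x \<and> x < L \<or> h = -1 \<and> 0 < x \<and> x \<le> L"

definition unfold_reflection :: "int \<Rightarrow> int \<Rightarrow> int \<Rightarrow> int" where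
  "unfold_reflection L h x = (if h = 1 then x else 2 * L - x)"

lemma unfold_reflection_bounds:
  "bouncing L h x \<Longrightarrow> 0 \<le> unfold_reflection L h x \<and> unfold_reflection L h x < 2 * L"
  by (auto simp: bouncing_def unfold_reflection_def)

lemma unfold_reflection_inj:
  "bouncing L h x \<Longrightarrow> bouncing L h' x' \<Longrightarrow> unfold_reflection L h x = unfold_reflection L h' x'
    \<Longrightarrow> h = h' \<and> x = x'"
  by (auto simp: bouncing_def unfold_reflection_def split: if_splits)

lemma unfold_reflection_eq_0_iff:
  "bouncing L h x \<Longrightarrow> unfold_reflection L h x = 0 \<longleftrightarrow> x = 0"
  by (auto simp: bouncing_def unfold_reflection_def)

lemma unfold_reflection_eq_iff:
  "bouncing L h x \<Longrightarrow> unfold_reflection L h x = L \<longleftrightarrow> x = L"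
  by (auto simp: bouncing_def unfold_reflection_def)

text \<open>Doubled coordinates: circle \<open>(i, j)\<close> is centred at \<open>(2j - 1, 2i - 1)\<close> with radius 1
  (the \<open>y\<close>-axis pointing down), so the link positions of adjacent circles coincide and the
  arc \<open>a\<close> runs from \<open>(start_x a, start_y a)\<close> to that point plus the heading.\<close>

definition compass_dx :: "nat \<Rightarrow> int" where
  "compass_dx p = (if p = 0 then 1 else if p = 2 then -1 else 0)"

definition compass_dy :: "nat \<Rightarrow> int" where
  "compass_dy p = (if p = 1 then -1 else if p = 3 then 1 else 0)"

definition start_x :: "circle \<times> nat \<Rightarrow> int" where
  "start_x a = 2 * int (snd (fst a)) - 1 + compass_dx (snd a)"

definition start_y :: "circle \<times> nat \<Rightarrow> int" where
  "start_y a = 2 * int (fst (fst a)) - 1 + compass_dy (snd a)"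

definition heading_x :: "(circle \<Rightarrow> int) \<Rightarrow> circle \<times> nat \<Rightarrow> int" where
  "heading_x g a = compass_dx (rot (g (fst a)) (snd a)) - compass_dx (snd a)"

definition heading_y :: "(circle \<Rightarrow> int) \<Rightarrow> circle \<times> nat \<Rightarrow> int" where
  "heading_y g a = compass_dy (rot (g (fst a)) (snd a)) - compass_dy (snd a)"

definition unfolded :: "nat \<Rightarrow> nat \<Rightarrow> (circle \<Rightarrow> int) \<Rightarrow> circle \<times> nat \<Rightarrow> int \<times> int" where
  "unfolded n m g a = (unfold_reflection (2 * int m) (heading_x g a) (start_x a),
                       unfold_reflection (2 * int n) (heading_y g a) (start_y a))"

text \<open>The \<open>Suc\<close> forms are needed because the simplifier rewrites small numerals of type
  \<open>nat\<close> into them.\<close>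

lemma rot_eval:
  "rot 1 0 = 1" "rot 1 1 = 2" "rot 1 2 = 3" "rot 1 3 = 0"
  "rot (-1) 0 = 3" "rot (-1) 1 = 0" "rot (-1) 2 = 1" "rot (-1) 3 = 2"
  "rot 1 (Suc 0) = 2" "rot 1 (Suc (Suc 0)) = 3" "rot 1 (Suc (Suc (Suc 0))) = 0"
  "rot (-1) (Suc 0) = 0" "rot (-1) (Suc (Suc 0)) = 1" "rot (-1) (Suc (Suc (Suc 0))) = 2"
  by (simp_all add: rot_def)

lemma arc_cases:
  assumes "direction_assignment n m g" and "a \<in> arcs n m"
  obtains i j p where "a = ((i, j), p)" "1 \<le> i" "i \<le> n" "1 \<le> j" "j \<le> m"
    "p = 0 \<or> p = 1 \<or> p = 2 \<or> p = 3" "g (i, j) = 1 \<or> g (i, j) = -1"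
  using assms unfolding arcs_def circles_def direction_assignment_def by fastforce

lemma direction_nbr:
  assumes "direction_assignment n m g" and "c \<in> circles n m" and "nbr c q \<in> circles n m"
    and "q < 4"
  shows "g (nbr c q) = - g c"
proof -
  have "adjacent n m (nbr c q) c"
    using assms(2-4) unfolding adjacent_def nbr_def circles_def
    by (cases c) (auto simp: less_Suc_eq numeral_eq_Suc)
  then show ?thesis
    using assms(1) unfolding direction_assignment_def by blast
qed

lemma step_arcs: "a \<in> arcs n m \<Longrightarrow> step n m g a \<in> arcs n m"
  unfolding step_def Let_def arcs_def by (auto simp: rot_def nat_less_iff)

lemma arc_bouncing:
  assumes "direction_assignment n m g" and "a \<in> arcs n m"
  shows "bouncing (2 * int m) (heading_x g a) (start_x a) \<and>
    bouncing (2 * int n) (heading_y g a) (start_y a)"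
proof -
  obtain i j p where a: "a = ((i, j), p)" "1 \<le> i" "i \<le> n" "1 \<le> j" "j \<le> m"
    and p: "p = 0 \<or> p = 1 \<or> p = 2 \<or> p = 3" and g: "g (i, j) = 1 \<or> g (i, j) = -1"
    using assms by (rule arc_cases)
  from p g show ?thesis
    using a by (elim disjE) (simp_all add: rot_eval bouncing_def heading_x_def heading_y_def
        start_x_def start_y_def compass_dx_def compass_dy_def)
qed

text \<open>Passing to a neighbour keeps both headings, while stopping at a wall reverses the heading
  perpendicular to it; either way the unfolded coordinates advance by one, up to wrapping around.\<close>

lemma unfolded_step_cases:
  assumes "direction_assignment n m g" and "a \<in> arcs n m"
  shows "fst (unfolded n m g (step n m g a)) - fst (unfolded n m g a) \<in> {1, 1 - 4 * int m}"
    and "snd (unfolded n m g (step n m g a)) - snd (unfolded n m g a) \<in> {1, 1 - 4 * int n}"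
proof -
  obtain i j p where a: "a = ((i, j), p)" "1 \<le> i" "i \<le> n" "1 \<le> j" "j \<le> m"
    and p: "p = 0 \<or> p = 1 \<or> p = 2 \<or> p = 3" and g: "g (i, j) = 1 \<or> g (i, j) = -1"
    using assms by (rule arc_cases)
  let ?q = "rot (g (i, j)) p"
  have "fst (unfolded n m g (step n m g a)) - fst (unfolded n m g a) \<in> {1, 1 - 4 * int m} \<and>
    snd (unfolded n m g (step n m g a)) - snd (unfolded n m g a) \<in> {1, 1 - 4 * int n}"
  proof (cases "nbr (i, j) ?q \<in> circles n m")
    case True
    have "g (nbr (i, j) ?q) = - g (i, j)"
      using direction_nbr[OF assms(1) _ True] a by (simp add: circles_def rot_def nat_less_iff)
    with p g show ?thesis
      using a True by (elim disjE) (simp_all add: rot_eval step_def Let_def nbr_def unfolded_def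
          unfold_reflection_def heading_x_def heading_y_def start_x_def start_y_def
          compass_dx_def compass_dy_def)
  next
    case False
    with p g show ?thesis
      using a by (elim disjE) (auto simp: rot_eval step_def Let_def nbr_def circles_def unfolded_def
          unfold_reflection_def heading_x_def heading_y_def start_x_def start_y_def
          compass_dx_def compass_dy_def)
  qed
  then show "fst (unfolded n m g (step n m g a)) - fst (unfolded n m g a) \<in> {1, 1 - 4 * int m}"
    and "snd (unfolded n m g (step n m g a)) - snd (unfolded n m g a) \<in> {1, 1 - 4 * int n}"
    by simp_all
qed

lemma unfolded_bounds:
  assumes "direction_assignment n m g" and "a \<in> arcs n m"
  shows "unfolded n m g a \<in> {0..<4 * int m} \<times> {0..<4 * int n}"
proof -
  have "bouncing (2 * int m) (heading_x g a) (start_x a)"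
    and "bouncing (2 * int n) (heading_y g a) (start_y a)"
    using arc_bouncing[OF assms] by simp_all
  from unfold_reflection_bounds[OF this(1)] unfold_reflection_bounds[OF this(2)] show ?thesis
    by (simp add: unfolded_def)
qed

lemma eq_succ_mod:
  fixes u u' K :: int
  assumes "0 \<le> u'" and "u' < K" and "u' - u \<in> {1, 1 - K}"
  shows "u' = (u + 1) mod K"
proof -
  have "u + 1 = u' \<or> u + 1 = u' + K"
    using assms(3) by auto
  then have "(u + 1) mod K = u' mod K"
    by auto
  then show ?thesis
    using assms(1,2) by simp
qed

lemma unfolded_step:
  assumes "direction_assignment n m g" and "a \<in> arcs n m"
  shows "unfolded n m g (step n m g a) =
    ((fst (unfolded n m g a) + 1) mod (4 * int m), (snd (unfolded n m g a) + 1) mod (4 * int n))"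
proof -
  have "unfolded n m g (step n m g a) \<in> {0..<4 * int m} \<times> {0..<4 * int n}"
    using unfolded_bounds[OF assms(1) step_arcs[of a n m g]] assms(2) by blast
  then show ?thesis
    using eq_succ_mod[OF _ _ unfolded_step_cases(1)[OF assms]]
      eq_succ_mod[OF _ _ unfolded_step_cases(2)[OF assms]]
    by (auto simp: prod_eq_iff)
qed

text \<open>An arc is determined by its start point and heading: the start point is a top or bottom
  point iff its \<open>x\<close>-coordinate is odd, and the vertical heading says which of the two.\<close>

definition arc_at :: "int \<Rightarrow> int \<Rightarrow> int \<Rightarrow> int \<Rightarrow> circle \<times> nat" where
  "arc_at x y hx hy =
     (let p = if odd x then (if hy = 1 then 1 else 3) else (if hx = 1 then 2 else 0)
      in ((nat ((y + 1 - compass_dy p) div 2), nat ((x + 1 - compass_dx p) div 2)), p))"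

lemma arc_at_start:
  assumes "direction_assignment n m g" and "a \<in> arcs n m"
  shows "arc_at (start_x a) (start_y a) (heading_x g a) (heading_y g a) = a"
proof -
  obtain i j p where a: "a = ((i, j), p)" "1 \<le> i" "i \<le> n" "1 \<le> j" "j \<le> m"
    and p: "p = 0 \<or> p = 1 \<or> p = 2 \<or> p = 3" and g: "g (i, j) = 1 \<or> g (i, j) = -1"
    using assms by (rule arc_cases)
  from p g show ?thesis
    using a by (elim disjE) (simp_all add: rot_eval arc_at_def heading_x_def heading_y_def
        start_x_def start_y_def compass_dx_def compass_dy_def)
qed

lemma inj_on_unfolded:
  assumes "direction_assignment n m g"
  shows "inj_on (unfolded n m g) (arcs n m)"
proof (rule inj_onI)
  fix a b assume a: "a \<in> arcs n m" and b: "b \<in> arcs n m"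
    and eq: "unfolded n m g a = unfolded n m g b"
  have "heading_x g a = heading_x g b \<and> start_x a = start_x b"
    using eq arc_bouncing[OF assms a] arc_bouncing[OF assms b] unfold_reflection_inj
    unfolding unfolded_def by blast
  moreover have "heading_y g a = heading_y g b \<and> start_y a = start_y b"
    using eq arc_bouncing[OF assms a] arc_bouncing[OF assms b] unfold_reflection_inj
    unfolding unfolded_def by blast
  ultimately show "a = b"
    using arc_at_start[OF assms a] arc_at_start[OF assms b] by metis
qed

definition wall_size :: "nat \<Rightarrow> nat \<Rightarrow> wall \<Rightarrow> nat" where
  "wall_size n m w = (case w of Top \<Rightarrow> m | Bottom \<Rightarrow> m | Left \<Rightarrow> n | Right \<Rightarrow> n)"

definition wall_arc :: "nat \<Rightarrow> nat \<Rightarrow> wall \<Rightarrow> nat \<Rightarrow> circle \<times> nat" where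
  "wall_arc n m w k = (case w of
      Top \<Rightarrow> ((1, k), 1) | Bottom \<Rightarrow> ((n, k), 3) | Left \<Rightarrow> ((k, 1), 2) | Right \<Rightarrow> ((k, m), 0))"

definition wall_line :: "nat \<Rightarrow> nat \<Rightarrow> wall \<Rightarrow> (int \<times> int) set" where
  "wall_line n m w = (case w of
      Top \<Rightarrow> UNIV \<times> {0} | Bottom \<Rightarrow> UNIV \<times> {2 * int n}
    | Left \<Rightarrow> {0} \<times> UNIV | Right \<Rightarrow> {2 * int m} \<times> UNIV)"

lemma unfolded_in_wall_line:
  assumes "direction_assignment n m g" and "a \<in> arcs n m"
  shows "unfolded n m g a \<in> wall_line n m w \<longleftrightarrow> a \<in> wall_arc n m w ` {1..wall_size n m w}"
proof -
  obtain i j p where a: "a = ((i, j), p)" "1 \<le> i" "i \<le> n" "1 \<le> j" "j \<le> m"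
    and p: "p = 0 \<or> p = 1 \<or> p = 2 \<or> p = 3"
    using assms by (rule arc_cases)
  have "unfolded n m g a \<in> wall_line n m w \<longleftrightarrow> (case w of
      Top \<Rightarrow> start_y a = 0 | Bottom \<Rightarrow> start_y a = 2 * int n
    | Left \<Rightarrow> start_x a = 0 | Right \<Rightarrow> start_x a = 2 * int m)"
    using arc_bouncing[OF assms] unfold_reflection_eq_0_iff unfold_reflection_eq_iff
    by (cases w) (auto simp: unfolded_def wall_line_def)
  also have "\<dots> \<longleftrightarrow> a \<in> wall_arc n m w ` {1..wall_size n m w}"
    using p a by (cases w; elim disjE) (auto simp: wall_arc_def wall_size_def start_x_def
        start_y_def compass_dx_def compass_dy_def)
  finally show ?thesis .
qed

section \<open>Rings\<close>

lemma unfolded_iterate: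
  assumes "direction_assignment n m g" and "a \<in> arcs n m"
  shows "(step n m g ^^ k) a \<in> arcs n m \<and> unfolded n m g ((step n m g ^^ k) a) =
    ((fst (unfolded n m g a) + int k) mod (4 * int m), (snd (unfolded n m g a) + int k) mod (4 * int n))"
proof (induction k)
  case 0
  show ?case
    using assms(2) unfolded_bounds[OF assms] by (auto simp: prod_eq_iff)
next
  case (Suc k)
  then show ?case
    using step_arcs unfolded_step[OF assms(1)] by (simp add: mod_simps ac_simps)
qed

lemma ring_of_subset_arcs:
  assumes "direction_assignment n m g" and "a \<in> arcs n m"
  shows "ring_of n m g a \<subseteq> arcs n m"
  using unfolded_iterate[OF assms] unfolding ring_of_def by auto

lemma unfolded_ring_of:
  assumes "direction_assignment n m g" and "a \<in> arcs n m" and "1 \<le> n" and "1 \<le> m"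
  shows "unfolded n m g ` ring_of n m g a = diagonal_class (4 * m) (4 * n) (unfolded n m g a)"
proof -
  obtain u v where uv: "unfolded n m g a = (u, v)"
    by fastforce
  have "ring_of n m g a = range (\<lambda>k. (step n m g ^^ k) a)"
    by (auto simp: ring_of_def)
  then have "unfolded n m g ` ring_of n m g a = range (\<lambda>k. unfolded n m g ((step n m g ^^ k) a))"
    by (simp add: image_image)
  also have "\<dots> = range (\<lambda>k::nat. ((u + int k) mod int (4 * m), (v + int k) mod int (4 * n)))"
    using unfolded_iterate[OF assms(1,2)] uv by simp
  also have "\<dots> = diagonal_class (4 * m) (4 * n) (unfolded n m g a)"
    using diagonal_orbit[of "4 * m" "4 * n" u v] assms(3,4) uv by simp
  finally show ?thesis .
qed

lemma ring_of_eq_diagonal_class: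
  assumes "direction_assignment n m g" and "a \<in> arcs n m" and "1 \<le> n" and "1 \<le> m"
  shows "ring_of n m g a =
    {b \<in> arcs n m. unfolded n m g b \<in> diagonal_class (4 * m) (4 * n) (unfolded n m g a)}"
  using ring_of_subset_arcs[OF assms(1,2)] inj_on_unfolded[OF assms(1)]
  unfolding unfolded_ring_of[OF assms, symmetric] inj_on_def by blast

lemma ring_of_eq:
  assumes "direction_assignment n m g" and "a \<in> arcs n m" and "1 \<le> n" and "1 \<le> m"
    and "b \<in> ring_of n m g a"
  shows "ring_of n m g b = ring_of n m g a"
proof -
  have "b \<in> arcs n m"
    using ring_of_subset_arcs[OF assms(1,2)] assms(5) by blast
  moreover have "unfolded n m g b \<in> diagonal_class (4 * m) (4 * n) (unfolded n m g a)"
    using assms(5) unfolding ring_of_eq_diagonal_class[OF assms(1-4)] by blast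
  ultimately show ?thesis
    using assms(1-4) by (simp add: ring_of_eq_diagonal_class diagonal_class_eq)
qed

lemma gcd_mult_4: "gcd (4 * m) (4 * n) = 4 * gcd n (m :: nat)"
  by (simp add: gcd_mult_distrib_nat gcd.commute)

lemma card_ring_of:
  assumes "direction_assignment n m g" and "a \<in> arcs n m" and "1 \<le> n" and "1 \<le> m"
  shows "card (ring_of n m g a) = 4 * m * (n div gcd n m)"
proof -
  have "inj_on (unfolded n m g) (ring_of n m g a)"
    using inj_on_unfolded[OF assms(1)] ring_of_subset_arcs[OF assms(1,2)] by (rule inj_on_subset)
  then have "card (ring_of n m g a) = card (diagonal_class (4 * m) (4 * n) (unfolded n m g a))"
    using card_image unfolded_ring_of[OF assms] by metis
  also have "\<dots> = 4 * m * (n div gcd n m)"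
    using assms(3) by (simp add: card_diagonal_class gcd_mult_4)
  finally show ?thesis .
qed

lemma on_ring_at_wall:
  assumes "nbr c q \<notin> circles n m"
  shows "on_ring g (ring_of n m g a) c q \<longleftrightarrow> (c, q) \<in> ring_of n m g a"
proof
  assume "on_ring g (ring_of n m g a) c q"
  then obtain p where p: "(c, p) \<in> ring_of n m g a" "p = q \<or> rot (g c) p = q"
    unfolding on_ring_def by blast
  show "(c, q) \<in> ring_of n m g a"
  proof (cases "p = q")
    case False
    obtain k where k: "(step n m g ^^ k) a = (c, p)"
      using p(1) unfolding ring_of_def by auto
    have "step n m g (c, p) = (c, q)"
      using False p(2) assms by (simp add: step_def Let_def)
    then have "(step n m g ^^ Suc k) a = (c, q)"
      using k by simp
    then show ?thesis
      unfolding ring_of_def by (intro CollectI exI[of _ "Suc k"]) simp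
  qed (use p in simp)
qed (auto simp: on_ring_def)

lemma hits_eq_card_wall_arcs:
  "hits n m g w (ring_of n m g a) =
    card {k \<in> {1..wall_size n m w}. wall_arc n m w k \<in> ring_of n m g a}"
  by (cases w) (simp_all add: hits_def wall_size_def wall_arc_def on_ring_at_wall nbr_def circles_def)

lemma inj_on_wall_arc: "inj_on (wall_arc n m w) K"
  by (cases w) (auto simp: inj_on_def wall_arc_def)

lemma card_diagonal_class_Int_wall_line:
  assumes "1 \<le> n" and "1 \<le> m"
  shows "card (diagonal_class (4 * m) (4 * n) x \<inter> wall_line n m w) = wall_size n m w div gcd n m"
proof -
  have row: "card (diagonal_class (4 * m) (4 * n) x \<inter> UNIV \<times> {v}) = m div gcd n m"
    if "0 \<le> v" "v < 4 * int n" for v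
    using card_diagonal_class_row[of "4 * m" v "4 * n" x] that assms
    by (simp add: card_Int_row gcd_mult_4)
  have column: "card (diagonal_class (4 * m) (4 * n) x \<inter> {u} \<times> UNIV) = n div gcd n m"
    if "0 \<le> u" "u < 4 * int m" for u
    using card_diagonal_class_column[of "4 * n" u "4 * m" x] that assms
    by (simp add: card_Int_column gcd_mult_4)
  show ?thesis
    using assms by (cases w) (simp_all add: wall_line_def wall_size_def row column)
qed

lemma hits_ring_of:
  assumes "direction_assignment n m g" and "a \<in> arcs n m" and "1 \<le> n" and "1 \<le> m"
  shows "hits n m g w (ring_of n m g a) = wall_size n m w div gcd n m"
proof -
  let ?R = "ring_of n m g a" and ?K = "{1..wall_size n m w}" and ?L = "wall_line n m w"
  have R: "?R \<subseteq> arcs n m"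
    by (rule ring_of_subset_arcs[OF assms(1,2)])
  have "hits n m g w ?R = card (wall_arc n m w ` {k \<in> ?K. wall_arc n m w k \<in> ?R})"
    unfolding hits_eq_card_wall_arcs by (rule card_image[symmetric, OF inj_on_wall_arc])
  also have "wall_arc n m w ` {k \<in> ?K. wall_arc n m w k \<in> ?R} = {b \<in> ?R. unfolded n m g b \<in> ?L}"
  proof (intro set_eqI iffI)
    fix b assume "b \<in> {b \<in> ?R. unfolded n m g b \<in> ?L}"
    moreover from this have "b \<in> wall_arc n m w ` ?K"
      using R unfolded_in_wall_line[OF assms(1)] by blast
    ultimately show "b \<in> wall_arc n m w ` {k \<in> ?K. wall_arc n m w k \<in> ?R}"
      by blast
  qed (use R unfolded_in_wall_line[OF assms(1)] in blast)
  also have "card \<dots> = card (unfolded n m g ` {b \<in> ?R. unfolded n m g b \<in> ?L})"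
    using inj_on_unfolded[OF assms(1)] R by (intro card_image[symmetric]) (auto intro: inj_on_subset)
  also have "unfolded n m g ` {b \<in> ?R. unfolded n m g b \<in> ?L} = unfolded n m g ` ?R \<inter> ?L"
    by blast
  also have "card \<dots> = wall_size n m w div gcd n m"
    unfolding unfolded_ring_of[OF assms] by (rule card_diagonal_class_Int_wall_line[OF assms(3,4)])
  finally show ?thesis .
qed

lemma Union_rings:
  assumes "direction_assignment n m g"
  shows "\<Union> (rings n m g) = arcs n m"
proof
  show "\<Union> (rings n m g) \<subseteq> arcs n m"
    unfolding rings_def using ring_of_subset_arcs[OF assms] by blast
  have "a \<in> ring_of n m g a" for a
    unfolding ring_of_def by (intro CollectI exI[of _ 0]) simp
  then show "arcs n m \<subseteq> \<Union> (rings n m g)"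
    unfolding rings_def by blast
qed

lemma rings_disjoint:
  assumes "direction_assignment n m g" and "1 \<le> n" and "1 \<le> m"
    and "R \<in> rings n m g" and "R' \<in> rings n m g" and "R \<inter> R' \<noteq> {}"
  shows "R = R'"
proof -
  obtain a a' where "a \<in> arcs n m" "R = ring_of n m g a" "a' \<in> arcs n m" "R' = ring_of n m g a'"
    using assms(4,5) unfolding rings_def by blast
  moreover obtain b where "b \<in> R" "b \<in> R'"
    using assms(6) by blast
  ultimately show ?thesis
    using ring_of_eq[OF assms(1) _ assms(2,3)] by metis
qed

lemma card_rings:
  assumes "direction_assignment n m g" and "1 \<le> n" and "1 \<le> m"
  shows "card (rings n m g) = gcd n m"
proof -
  have "4 * m * (n div gcd n m) * card (rings n m g) = card (\<Union> (rings n m g))"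
  proof (rule card_partition)
    show "finite (rings n m g)"
      unfolding rings_def arcs_def circles_def by simp
    show "finite (\<Union> (rings n m g))"
      unfolding Union_rings[OF assms(1)] arcs_def circles_def by simp
    show "card R = 4 * m * (n div gcd n m)" if "R \<in> rings n m g" for R
      using that card_ring_of[OF assms(1) _ assms(2,3)] unfolding rings_def by blast
    show "R \<inter> R' = {}" if "R \<in> rings n m g" "R' \<in> rings n m g" "R \<noteq> R'" for R R'
      using that rings_disjoint[OF assms] by blast
  qed
  also have "\<dots> = 4 * m * (n div gcd n m) * gcd n m"
    unfolding Union_rings[OF assms(1)] arcs_def circles_def by (simp add: card_cartesian_product)
  finally show ?thesis
    using assms(2,3) by (simp add: dvd_div_eq_0_iff)
qed

theorem theorem5:
  fixes n m :: nat and g :: "circle \<Rightarrow> int"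
  assumes "n \<ge> 1" and "m \<ge> 1" and "direction_assignment n m g"
  shows "card (rings n m g) = gcd n m \<and>
    (\<forall>R\<in>rings n m g. \<forall>R'\<in>rings n m g.
       ring_length R = ring_length R' \<and> (\<forall>w. hits n m g w R = hits n m g w R'))"
proof -
  have "ring_length R = 2 * pi * m * (n div gcd n m) \<and>
      (\<forall>w. hits n m g w R = wall_size n m w div gcd n m)" if "R \<in> rings n m g" for R
    using that card_ring_of[OF assms(3) _ assms(1,2)] hits_ring_of[OF assms(3) _ assms(1,2)]
    unfolding rings_def ring_length_def by auto
  then show ?thesis
    using card_rings[OF assms(3,1,2)] by simp
qed

end
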